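(* Let $n\ge1$. For an $n$-mode Gaussian channel $\phi=\phi(T,N,\mathbf d)$ define $$\mathcal I_d^{GC}(\phi):=h(\|T^{eo}\|_{\mathrm{Tr}})+h(\|T^{oe}\|_{\mathrm{Tr}}\,\|T^{ee}\|_{\mathrm{Tr}})+h(\|N^{oe}\|_{\mathrm{Tr}})+h(\|\mathbf d^{e}\|_1),$$ where $h:[0,\infty)\to\{0,1\}$ is given by $h(0)=0$ and $h(t)=1$ for $t\neq0$. Then $\mathcal I_d^{GC}$ is an imaginarity measure for Gaussian channels: (GC1) $\mathcal I_d^{GC}(\phi)\ge0$ for all $n$-mode Gaussian channels $\phi$, with equality if and only if $\phi$ is real; (GC2) $\mathcal I_d^{GC}(\Phi(\phi))\le\mathcal I_d^{GC}(\phi)$ for every $n$-mode real Gaussian superchannel $\Phi$ and every $n$-mode Gaussian channel $\phi$.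
   Context: Fix $n\ge1$. For a real $2n\times2n$ matrix $M=(m_{kl})$ write the $n\times n$ blocks $M^{oe}=(m_{2k-1,2l})_{k,l=1}^n$, $M^{eo}=(m_{2k,2l-1})_{k,l=1}^n$, $M^{ee}=(m_{2k,2l})_{k,l=1}^n$, and for $\mathbf d=(d_1,\dots,d_{2n})^{\mathrm T}$ write $\mathbf d^e=(d_2,d_4,\dots,d_{2n})^{\mathrm T}$. $\|\cdot\|_{\mathrm{Tr}}$ is the trace norm of matrices and $\|\cdot\|_1$ the $\ell_1$-norm of vectors. Let $\Delta_n=\bigoplus_{k=1}^n\begin{pmatrix}0&1\\-1&0\end{pmatrix}$ and $\Sigma_n=\bigoplus_{k=1}^n\mathrm{diag}(1,-1)$. An $n$-mode Gaussian channel is identified with a triple $\phi=\phi(T,N,\mathbf d)$, where $T=(t_{kl})$, $N=(n_{kl})$ are real $2n\times2n$ matrices with $N=N^{\mathrm T}\ge0$, $\mathbf d\in\mathbb R^{2n}$, and $N+i\Delta_n-iT\Delta_nT^{\mathrm T}\ge0$. It is called real if $d_{2k}=0$ and $n_{2k-1,2l}=0$ for all $k,l\in\{1,\dots,n\}$, and either $t_{2k,2l-1}=t_{2k,2l}=0$ for all $k,l$, or $t_{2k-1,2l}=t_{2k,2l-1}=0$ for all $k,l$. An $n$-mode Gaussian superchannel is a quadruple $\Phi=\Phi(A,O,Y,\bar{\mathbf d})$ of real $2n\times2n$ matrices $A,O,Y$ and $\bar{\mathbf d}\in\mathbb R^{2n}$ with $Y=Y^{\mathrm T}$, $OO^{\mathrm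 T}=I_{2n}$, $Y+i\Delta_n-iA\Delta_nA^{\mathrm T}\ge0$, $i\Delta_n-iO\Delta_nO^{\mathrm T}\ge0$, acting by $\Phi(\phi(T,N,\mathbf d))=\phi(AT\Sigma_nO^{\mathrm T}\Sigma_n,\ ANA^{\mathrm T}+Y,\ A\mathbf d+\bar{\mathbf d})$. It is called real if it maps every real Gaussian channel to a real Gaussian channel. *)

theory Defs
  imports Complex_Main "Jordan_Normal_Form.Matrix" "Jordan_Normal_Form.Char_Poly"
begin

text \<open>Conventions: matrices are JNF matrices with 0-based indices. The paper's 1-based
  index 2k-1 (odd) is our 2(k-1), the paper's 2k (even) is our 2(k-1)+1.\<close>

definition blk_oe :: "nat \<Rightarrow> real mat \<Rightarrow> real mat" where
  "blk_oe n M = mat n n (\<lambda>(k,l). M $$ (2*k, 2*l+1))"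
definition blk_eo :: "nat \<Rightarrow> real mat \<Rightarrow> real mat" where
  "blk_eo n M = mat n n (\<lambda>(k,l). M $$ (2*k+1, 2*l))"
definition blk_ee :: "nat \<Rightarrow> real mat \<Rightarrow> real mat" where
  "blk_ee n M = mat n n (\<lambda>(k,l). M $$ (2*k+1, 2*l+1))"
definition vec_e :: "nat \<Rightarrow> real vec \<Rightarrow> real vec" where
  "vec_e n d = vec n (\<lambda>k. d $ (2*k+1))"

text \<open>Trace norm = sum of singular values = sum of square roots of the eigenvalues
  (with multiplicity) of A^T A.\<close>
definition trace_norm :: "real mat \<Rightarrow> real" where
  "trace_norm A = sum_mset (image_mset sqrt (proots (char_poly (transpose_mat A * A))))"

definition l1_norm :: "real vec \<Rightarrow> real" where
  "l1_norm v = (\<Sum>k<dim_vec v. \<bar>v $ k\<bar>)"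

definition Delta :: "nat \<Rightarrow> real mat" where
  "Delta n = mat (2*n) (2*n) (\<lambda>(i,j). if even i \<and> j = i + 1 then 1
                                      else if odd i \<and> j + 1 = i then -1 else 0)"

definition Sigma :: "nat \<Rightarrow> real mat" where
  "Sigma n = mat (2*n) (2*n) (\<lambda>(i,j). if i = j then (if even i then 1 else -1) else 0)"

text \<open>Positive semidefiniteness of the complex matrix P + i Q (P, Q real m x m).\<close>
definition cpsd :: "nat \<Rightarrow> real mat \<Rightarrow> real mat \<Rightarrow> bool" where
  "cpsd m P Q \<longleftrightarrow> (\<forall>v :: nat \<Rightarrow> complex.
     (let q = (\<Sum>i<m. \<Sum>j<m. cnj (v i) * (complex_of_real (P $$ (i,j)) + \<i> * complex_of_real (Q $$ (i,j))) * v j)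
      in Im q = 0 \<and> Re q \<ge> 0))"

definition rpsd :: "nat \<Rightarrow> real mat \<Rightarrow> bool" where
  "rpsd m P \<longleftrightarrow> (\<forall>x :: nat \<Rightarrow> real. (\<Sum>i<m. \<Sum>j<m. x i * P $$ (i,j) * x j) \<ge> 0)"

definition gaussian_channel :: "nat \<Rightarrow> real mat \<Rightarrow> real mat \<Rightarrow> real vec \<Rightarrow> bool" where
  "gaussian_channel n T N d \<longleftrightarrow>
     T \<in> carrier_mat (2*n) (2*n) \<and> N \<in> carrier_mat (2*n) (2*n) \<and> d \<in> carrier_vec (2*n) \<and>
     N = transpose_mat N \<and> rpsd (2*n) N \<and>
     cpsd (2*n) N (Delta n - T * Delta n * transpose_mat T)"

definition real_channel :: "nat \<Rightarrow> real mat \<Rightarrow> real mat \<Rightarrow> real vec \<Rightarrow> bool" where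
  "real_channel n T N d \<longleftrightarrow>
     (\<forall>k<n. d $ (2*k+1) = 0) \<and> (\<forall>k<n. \<forall>l<n. N $$ (2*k, 2*l+1) = 0) \<and>
     ((\<forall>k<n. \<forall>l<n. T $$ (2*k+1, 2*l) = 0 \<and> T $$ (2*k+1, 2*l+1) = 0) \<or>
      (\<forall>k<n. \<forall>l<n. T $$ (2*k, 2*l+1) = 0 \<and> T $$ (2*k+1, 2*l) = 0))"

definition gaussian_superchannel :: "nat \<Rightarrow> real mat \<Rightarrow> real mat \<Rightarrow> real mat \<Rightarrow> real vec \<Rightarrow> bool" where
  "gaussian_superchannel n A Om Y db \<longleftrightarrow>
     A \<in> carrier_mat (2*n) (2*n) \<and> Om \<in> carrier_mat (2*n) (2*n) \<and> Y \<in> carrier_mat (2*n) (2*n) \<and>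
     db \<in> carrier_vec (2*n) \<and> Y = transpose_mat Y \<and> Om * transpose_mat Om = 1\<^sub>m (2*n) \<and>
     cpsd (2*n) Y (Delta n - A * Delta n * transpose_mat A) \<and>
     cpsd (2*n) (0\<^sub>m (2*n) (2*n)) (Delta n - Om * Delta n * transpose_mat Om)"

text \<open>Action of the superchannel Phi(A,Om,Y,db) on phi(T,N,d).\<close>
definition sc_T :: "nat \<Rightarrow> real mat \<Rightarrow> real mat \<Rightarrow> real mat \<Rightarrow> real mat" where
  "sc_T n A Om T = A * T * Sigma n * transpose_mat Om * Sigma n"
definition sc_N :: "real mat \<Rightarrow> real mat \<Rightarrow> real mat \<Rightarrow> real mat" where
  "sc_N A Y N = A * N * transpose_mat A + Y"
definition sc_d :: "real mat \<Rightarrow> real vec \<Rightarrow> real vec \<Rightarrow> real vec" where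
  "sc_d A db d = A *\<^sub>v d + db"

definition real_superchannel :: "nat \<Rightarrow> real mat \<Rightarrow> real mat \<Rightarrow> real mat \<Rightarrow> real vec \<Rightarrow> bool" where
  "real_superchannel n A Om Y db \<longleftrightarrow> gaussian_superchannel n A Om Y db \<and>
     (\<forall>T N d. gaussian_channel n T N d \<and> real_channel n T N d \<longrightarrow>
        gaussian_channel n (sc_T n A Om T) (sc_N A Y N) (sc_d A db d) \<and>
        real_channel n (sc_T n A Om T) (sc_N A Y N) (sc_d A db d))"

definition hh :: "real \<Rightarrow> real" where
  "hh t = (if t = 0 then 0 else 1)"

definition I_GC :: "nat \<Rightarrow> real mat \<Rightarrow> real mat \<Rightarrow> real vec \<Rightarrow> real" where
  "I_GC n T N d = hh (trace_norm (blk_eo n T)) + hh (trace_norm (blk_oe n T) * trace_norm (blk_ee n T))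
                 + hh (trace_norm (blk_oe n N)) + hh (l1_norm (vec_e n d))"

end

theory Submission
  imports Defs "Jordan_Normal_Form.Schur_Decomposition"
begin

text \<open>
  GC1: the trace norm of a real matrix A vanishes only if A = 0, because the eigenvalues of
  A^T A are nonnegative and sum to its trace, the sum of the squared entries of A. Hence I_GC
  vanishes exactly when the blocks whose vanishing defines a real channel vanish.

  GC2: each of the four terms is monotone because a real superchannel preserves the vanishing of
  T^eo, of T^oe or T^ee, of N^oe, and of d^e. Realness of the superchannel is only known on
  Gaussian channels, but adding enough isotropic noise c I makes any (T, E, d) a Gaussian
  channel by diagonal dominance. So the superchannel sends every real triple (T, c I + E, d)
  with c large to a real one, and linearity in T and affinity in c give three of the four
  statements. For the term with T^oe and T^ee, elementary matrices show that either the odd rows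
  of A vanish (and with them the output T^ee) or O^oe = 0. In the second case orthogonality
  gives O^eo = 0, so the odd output columns depend only on the odd input columns, and these are
  the odd columns of a real input.
\<close>

section \<open>Trace norm\<close>

lemma sum_mset_image_nonneg_eq_0:
  fixes f :: "'a \<Rightarrow> real"
  assumes "\<And>y. y \<in># M \<Longrightarrow> f y \<ge> 0" and "sum_mset (image_mset f M) = 0" and "x \<in># M"
  shows "f x = 0"
proof -
  have "sum_mset (image_mset f M) = f x + sum_mset (image_mset f (M - {#x#}))"
    using assms(3) by (metis image_mset_add_mset insert_DiffM sum_mset.insert)
  moreover have "sum_mset (image_mset f (M - {#x#})) \<ge> 0"
    using sum_mset_mono[of "M - {#x#}" "\<lambda>_. 0" f] assms(1) by (auto dest: in_diffD)
  ultimately show ?thesis using assms by (metis add_nonneg_eq_0_iff)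
qed

lemma cnj_mult_self: "cnj z * z = complex_of_real ((cmod z)\<^sup>2)"
  by (metis complex_norm_square mult.commute)

text \<open>For an eigenvector v: e |v|^2 = |A v|^2.\<close>
lemma gram_eigenvalue_real_nonneg:
  fixes A :: "real mat"
  assumes A: "A \<in> carrier_mat m n"
    and ev: "eigenvalue (map_mat complex_of_real (A\<^sup>T * A)) e"
  shows "e = complex_of_real (Re e) \<and> Re e \<ge> 0"
proof -
  let ?S = "map_mat complex_of_real (A\<^sup>T * A)"
  obtain v where v: "v \<in> carrier_vec n" "v \<noteq> 0\<^sub>v n" "?S *\<^sub>v v = e \<cdot>\<^sub>v v"
    using ev A unfolding eigenvalue_def eigenvector_def by auto
  define w where "w k = (\<Sum>j<n. complex_of_real (A $$ (k,j)) * v $ j)" for k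
  define V where "V = (\<Sum>i<n. (cmod (v $ i))\<^sup>2)"
  define W where "W = (\<Sum>k<m. (cmod (w k))\<^sup>2)"
  have Sv: "(?S *\<^sub>v v) $ i = (\<Sum>k<m. complex_of_real (A $$ (k,i)) * w k)" if "i < n" for i
  proof -
    have "(?S *\<^sub>v v) $ i
        = (\<Sum>j<n. \<Sum>k<m. complex_of_real (A $$ (k,i)) * (complex_of_real (A $$ (k,j)) * v $ j))"
      using A v(1) that by (simp add: scalar_prod_def atLeast0LessThan sum_distrib_left mult_ac)
    then show ?thesis unfolding w_def sum_distrib_left by (simp add: sum.swap[of _ "{..<n}"])
  qed
  have "e * complex_of_real V = (\<Sum>i<n. cnj (v $ i) * (e * v $ i))"
    unfolding V_def of_real_sum sum_distrib_left cnj_mult_self[symmetric] by (simp add: mult_ac)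
  also have "\<dots> = (\<Sum>i<n. cnj (v $ i) * (?S *\<^sub>v v) $ i)"
    using v by (intro sum.cong refl) simp
  also have "\<dots> = (\<Sum>i<n. \<Sum>k<m. cnj (v $ i) * complex_of_real (A $$ (k,i)) * w k)"
    by (intro sum.cong refl) (simp add: Sv sum_distrib_left mult.assoc)
  also have "\<dots> = (\<Sum>k<m. \<Sum>i<n. cnj (v $ i) * complex_of_real (A $$ (k,i)) * w k)"
    by (rule sum.swap)
  also have "\<dots> = (\<Sum>k<m. cnj (w k) * w k)"
    unfolding w_def cnj_sum complex_cnj_mult complex_cnj_complex_of_real sum_distrib_right
    by (simp add: mult_ac)
  also have "\<dots> = complex_of_real W"
    unfolding W_def of_real_sum cnj_mult_self ..
  finally have eVW: "e * complex_of_real V = complex_of_real W" .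
  obtain i where i: "i < n" "v $ i \<noteq> 0"
    using v(1,2) by (metis vec_eq_iff carrier_vecD index_zero_vec)
  have "V > 0"
    unfolding V_def using i by (intro sum_pos2[of _ i]) auto
  then have "e = complex_of_real (W / V)" using eVW by (simp add: field_simps)
  moreover have "W / V \<ge> 0" unfolding W_def using \<open>V > 0\<close> by (simp add: sum_nonneg)
  ultimately show ?thesis by simp
qed

definition mat_trace :: "'a::comm_ring_1 mat \<Rightarrow> 'a" where
  "mat_trace A = (\<Sum>i<dim_row A. A $$ (i,i))"

lemma mat_trace_mult_comm:
  fixes A B :: "'a::comm_ring_1 mat"
  assumes "A \<in> carrier_mat m n" "B \<in> carrier_mat n m"
  shows "mat_trace (A * B) = mat_trace (B * A)"
proof -
  have "mat_trace (A * B) = (\<Sum>i<m. \<Sum>k<n. A $$ (i,k) * B $$ (k,i))"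
    unfolding mat_trace_def using assms by (simp add: scalar_prod_def atLeast0LessThan)
  also have "\<dots> = (\<Sum>k<n. \<Sum>i<m. B $$ (k,i) * A $$ (i,k))"
    by (subst sum.swap) (simp add: mult.commute)
  also have "\<dots> = mat_trace (B * A)"
    unfolding mat_trace_def using assms by (simp add: scalar_prod_def atLeast0LessThan)
  finally show ?thesis .
qed

lemma mat_trace_similar:
  assumes "similar_mat_wit A B P Q"
  shows "mat_trace A = mat_trace B"
proof -
  obtain n where C: "A \<in> carrier_mat n n" "B \<in> carrier_mat n n" "P \<in> carrier_mat n n"
    "Q \<in> carrier_mat n n" and QP: "Q * P = 1\<^sub>m n" and APBQ: "A = P * B * Q"
    using assms unfolding similar_mat_wit_def Let_def by auto
  have "mat_trace A = mat_trace (P * (B * Q))"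
    using C APBQ by (simp add: assoc_mult_mat[of P n n B n Q n])
  also have "\<dots> = mat_trace (B * Q * P)" using C by (intro mat_trace_mult_comm) auto
  also have "\<dots> = mat_trace B" using C QP by (simp add: assoc_mult_mat[of B n n Q n P n])
  finally show ?thesis .
qed

lemma mat_trace_eq_sum_eigenvalues:
  fixes A :: "'a::conjugatable_ordered_field mat"
  assumes A: "A \<in> carrier_mat n n" and cp: "char_poly A = (\<Prod>e\<leftarrow>es. [:- e, 1:])"
  shows "mat_trace A = sum_list es"
proof -
  obtain B P Q where sd: "schur_decomposition A es = (B,P,Q)"
    by (cases "schur_decomposition A es") auto
  from schur_decomposition[OF A cp sd]
  have sim: "similar_mat_wit A B P Q" and diag: "diag_mat B = es" by auto
  have "mat_trace A = mat_trace B" by (rule mat_trace_similar[OF sim])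
  also have "\<dots> = sum_list (diag_mat B)"
    unfolding mat_trace_def diag_mat_def by (simp add: sum_list_sum_nth atLeast0LessThan)
  finally show ?thesis using diag by simp
qed

lemma eigenvalue_zero_mat:
  assumes "eigenvalue (0\<^sub>m n n :: 'a::field mat) x"
  shows "x = 0"
proof -
  obtain v where v: "v \<in> carrier_vec n" "v \<noteq> 0\<^sub>v n" "0\<^sub>m n n *\<^sub>v v = x \<cdot>\<^sub>v v"
    using assms unfolding eigenvalue_def eigenvector_def by auto
  obtain i where i: "i < n" "v $ i \<noteq> 0"
    using v(1,2) by (metis vec_eq_iff carrier_vecD index_zero_vec)
  have "x * v $ i = (0\<^sub>m n n *\<^sub>v v) $ i" using v(1,3) i by simp
  also have "\<dots> = 0" using v(1) i by (simp add: scalar_prod_def)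
  finally show ?thesis using i by simp
qed

lemma real_char_poly_root_iff:
  fixes S :: "real mat"
  assumes S: "S \<in> carrier_mat n n"
  shows "poly (char_poly S) x = 0 \<longleftrightarrow> eigenvalue (map_mat complex_of_real S) (complex_of_real x)"
proof -
  have Sc: "map_mat complex_of_real S \<in> carrier_mat n n" using S by simp
  show ?thesis
    unfolding eigenvalue_root_char_poly[OF Sc] of_real_hom.char_poly_hom[OF S]
    by (simp add: of_real_hom.poly_map_poly)
qed

lemma gram_char_poly_root_nonneg:
  fixes A :: "real mat"
  assumes A: "A \<in> carrier_mat m n" and "poly (char_poly (A\<^sup>T * A)) x = 0"
  shows "x \<ge> 0"
proof -
  have "A\<^sup>T * A \<in> carrier_mat n n" using A by simp
  then have "eigenvalue (map_mat complex_of_real (A\<^sup>T * A)) (complex_of_real x)"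
    using real_char_poly_root_iff assms(2) by blast
  from gram_eigenvalue_real_nonneg[OF A this] show ?thesis by simp
qed

lemma gram_char_poly_roots_0_imp_0:
  fixes A :: "real mat"
  assumes A: "A \<in> carrier_mat m n"
    and roots_0: "\<And>x. poly (char_poly (A\<^sup>T * A)) x = 0 \<Longrightarrow> x = 0"
  shows "A = 0\<^sub>m m n"
proof -
  let ?S = "A\<^sup>T * A"
  let ?Sc = "map_mat complex_of_real ?S"
  have S: "?S \<in> carrier_mat n n" and Sc: "?Sc \<in> carrier_mat n n" using A by auto
  have eigenvalues_0: "e = 0" if "eigenvalue ?Sc e" for e
  proof -
    have e: "e = complex_of_real (Re e)" using gram_eigenvalue_real_nonneg[OF A that] by simp
    then have "poly (char_poly ?S) (Re e) = 0"
      using real_char_poly_root_iff[OF S] that by simp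
    then have "Re e = 0" by (rule roots_0)
    then show ?thesis using e by (metis of_real_0)
  qed
  obtain es where es: "char_poly ?Sc = (\<Prod>e\<leftarrow>es. [:- e, 1:])"
    using char_poly_factorized[OF Sc] by blast
  have "e \<in> set es \<Longrightarrow> eigenvalue ?Sc e" for e
    unfolding eigenvalue_root_char_poly[OF Sc] es poly_prod_list prod_list_zero_iff by auto
  then have "map (\<lambda>_. 0) es = es" using eigenvalues_0 by (intro map_idI) auto
  then have "mat_trace ?Sc = 0" using mat_trace_eq_sum_eigenvalues[OF Sc es] by (metis sum_list_0)
  moreover have "mat_trace ?Sc = complex_of_real (mat_trace ?S)"
    unfolding mat_trace_def of_real_sum using A by simp
  moreover have "mat_trace ?S = (\<Sum>i<n. \<Sum>k<m. (A $$ (k,i))\<^sup>2)"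
    unfolding mat_trace_def using A by (simp add: scalar_prod_def atLeast0LessThan power2_eq_square)
  ultimately have "(\<Sum>i<n. \<Sum>k<m. (A $$ (k,i))\<^sup>2) = 0" by (metis of_real_eq_0_iff)
  then have "A $$ (k,i) = 0" if "k < m" "i < n" for k i
    using that by (simp add: sum_nonneg_eq_0_iff sum_nonneg)
  then show ?thesis using A by (intro eq_matI) auto
qed

lemma trace_norm_eq_0_iff:
  assumes A: "A \<in> carrier_mat m n"
  shows "trace_norm A = 0 \<longleftrightarrow> A = 0\<^sub>m m n"
proof -
  let ?p = "char_poly (A\<^sup>T * A)"
  have S: "A\<^sup>T * A \<in> carrier_mat n n" using A by simp
  have roots: "set_mset (proots ?p) = {x. poly ?p x = 0}"
    using degree_monic_char_poly[OF S] by (intro set_count_proots) auto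
  show ?thesis
  proof
    assume "trace_norm A = 0"
    then have "poly ?p x = 0 \<Longrightarrow> x = 0" for x
      using sum_mset_image_nonneg_eq_0[of "proots ?p" sqrt x] roots gram_char_poly_root_nonneg[OF A]
      unfolding trace_norm_def by auto
    then show "A = 0\<^sub>m m n" by (rule gram_char_poly_roots_0_imp_0[OF A])
  next
    assume "A = 0\<^sub>m m n"
    then have "A\<^sup>T * A = 0\<^sub>m n n" using A by simp
    then have "poly ?p x = 0 \<Longrightarrow> x = 0" for x
      using eigenvalue_root_char_poly[OF S] eigenvalue_zero_mat by metis
    then have "image_mset sqrt (proots ?p) = image_mset (\<lambda>_. 0) (proots ?p)"
      using roots by (intro image_mset_cong) auto
    then show "trace_norm A = 0" unfolding trace_norm_def by simp
  qed
qed

section \<open>Vanishing blocks\<close>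

lemma blk_eo_eq_0_iff: "blk_eo n M = 0\<^sub>m n n \<longleftrightarrow> (\<forall>k<n. \<forall>l<n. M $$ (2*k+1, 2*l) = 0)"
  unfolding blk_eo_def by (auto simp: mat_eq_iff)

lemma blk_oe_eq_0_iff: "blk_oe n M = 0\<^sub>m n n \<longleftrightarrow> (\<forall>k<n. \<forall>l<n. M $$ (2*k, 2*l+1) = 0)"
  unfolding blk_oe_def by (auto simp: mat_eq_iff)

lemma blk_ee_eq_0_iff: "blk_ee n M = 0\<^sub>m n n \<longleftrightarrow> (\<forall>k<n. \<forall>l<n. M $$ (2*k+1, 2*l+1) = 0)"
  unfolding blk_ee_def by (auto simp: mat_eq_iff)

lemma vec_e_eq_0_iff: "vec_e n d = 0\<^sub>v n \<longleftrightarrow> (\<forall>k<n. d $ (2*k+1) = 0)"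
  unfolding vec_e_def by (auto simp: vec_eq_iff)

lemma blk_eo_add:
  assumes "X \<in> carrier_mat (2*n) (2*n)" "Y \<in> carrier_mat (2*n) (2*n)"
  shows "blk_eo n (X + Y) = blk_eo n X + blk_eo n Y"
  using assms by (auto simp: blk_eo_def intro!: eq_matI)

lemma l1_norm_eq_0_iff: "l1_norm v = 0 \<longleftrightarrow> v = 0\<^sub>v (dim_vec v)"
  unfolding l1_norm_def by (auto simp: sum_nonneg_eq_0_iff vec_eq_iff)

lemma blk_oe_smult_one_plus:
  assumes "N \<in> carrier_mat (2*n) (2*n)"
  shows "blk_oe n (c \<cdot>\<^sub>m 1\<^sub>m (2*n) + N) = blk_oe n N"
  using assms by (auto simp: blk_oe_def intro!: eq_matI) presburger

definition real_transform :: "nat \<Rightarrow> real mat \<Rightarrow> bool" where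
  "real_transform n T \<longleftrightarrow> blk_eo n T = 0\<^sub>m n n \<and> (blk_oe n T = 0\<^sub>m n n \<or> blk_ee n T = 0\<^sub>m n n)"

lemma real_channel_iff_blocks:
  "real_channel n T N d \<longleftrightarrow> vec_e n d = 0\<^sub>v n \<and> blk_oe n N = 0\<^sub>m n n \<and> real_transform n T"
  unfolding real_channel_def real_transform_def blk_eo_eq_0_iff blk_oe_eq_0_iff blk_ee_eq_0_iff
    vec_e_eq_0_iff
  by blast

lemma blk_carrier [simp]:
  "blk_eo n M \<in> carrier_mat n n" "blk_oe n M \<in> carrier_mat n n" "blk_ee n M \<in> carrier_mat n n"
  unfolding blk_eo_def blk_oe_def blk_ee_def by auto

lemma trace_norm_blk_eq_0_iff:
  "trace_norm (blk_eo n M) = 0 \<longleftrightarrow> blk_eo n M = 0\<^sub>m n n"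
  "trace_norm (blk_oe n M) = 0 \<longleftrightarrow> blk_oe n M = 0\<^sub>m n n"
  "trace_norm (blk_ee n M) = 0 \<longleftrightarrow> blk_ee n M = 0\<^sub>m n n"
  by (simp_all add: trace_norm_eq_0_iff)

lemma l1_norm_vec_e_eq_0_iff: "l1_norm (vec_e n d) = 0 \<longleftrightarrow> vec_e n d = 0\<^sub>v n"
  by (simp add: l1_norm_eq_0_iff vec_e_def)

lemma hh_eq_0_iff: "hh t = 0 \<longleftrightarrow> t = 0"
  unfolding hh_def by simp

lemma hh_nonneg: "0 \<le> hh t"
  unfolding hh_def by simp

lemma hh_mono: "(s = 0 \<Longrightarrow> t = 0) \<Longrightarrow> hh t \<le> hh s"
  unfolding hh_def by simp

lemma I_GC_nonneg: "0 \<le> I_GC n T N d"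
  unfolding I_GC_def by (intro add_nonneg_nonneg hh_nonneg)

lemma I_GC_eq_0_iff: "I_GC n T N d = 0 \<longleftrightarrow> real_channel n T N d"
proof -
  have "I_GC n T N d = 0 \<longleftrightarrow> hh (trace_norm (blk_eo n T)) = 0
      \<and> hh (trace_norm (blk_oe n T) * trace_norm (blk_ee n T)) = 0
      \<and> hh (trace_norm (blk_oe n N)) = 0 \<and> hh (l1_norm (vec_e n d)) = 0"
    unfolding I_GC_def using hh_nonneg by (smt (verit))
  also have "\<dots> \<longleftrightarrow> real_channel n T N d"
    unfolding hh_eq_0_iff mult_eq_0_iff trace_norm_blk_eq_0_iff l1_norm_vec_e_eq_0_iff
      real_channel_iff_blocks real_transform_def
    by blast
  finally show ?thesis .
qed

section \<open>Channels with large isotropic noise\<close>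

lemma transpose_eq_index:
  assumes "A\<^sup>T = B" "A \<in> carrier_mat m m" "i < m" "j < m"
  shows "B $$ (i,j) = A $$ (j,i)"
  using assms by auto

lemma hermitian_form_real:
  fixes G :: "nat \<Rightarrow> nat \<Rightarrow> complex"
  assumes "\<And>i j. i < m \<Longrightarrow> j < m \<Longrightarrow> cnj (G i j) = G j i"
  shows "Im (\<Sum>i<m. \<Sum>j<m. cnj (v i) * G i j * v j) = 0"
proof -
  let ?g = "\<Sum>i<m. \<Sum>j<m. cnj (v i) * G i j * v j"
  have "cnj ?g = (\<Sum>i<m. \<Sum>j<m. cnj (v j) * G j i * v i)"
    unfolding cnj_sum by (intro sum.cong refl) (simp add: assms mult_ac)
  also have "\<dots> = ?g" by (rule sum.swap)
  finally have "cnj ?g = ?g" .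
  then show ?thesis using Reals_cnj_iff complex_is_Real_iff by blast
qed

lemma norm_form_le:
  fixes G :: "nat \<Rightarrow> nat \<Rightarrow> complex"
  shows "cmod (\<Sum>i<m. \<Sum>j<m. cnj (v i) * G i j * v j)
    \<le> (\<Sum>i<m. \<Sum>j<m. cmod (G i j)) * (\<Sum>i<m. (cmod (v i))\<^sup>2)"
proof -
  define V where "V = (\<Sum>i<m. (cmod (v i))\<^sup>2)"
  have v_bound: "cmod (v i) * cmod (v j) \<le> V" if "i < m" "j < m" for i j
  proof -
    have "(cmod (v i))\<^sup>2 \<le> V" "(cmod (v j))\<^sup>2 \<le> V"
      unfolding V_def using that by (auto intro!: member_le_sum)
    moreover have "2 * (cmod (v i) * cmod (v j)) \<le> (cmod (v i))\<^sup>2 + (cmod (v j))\<^sup>2"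
      using sum_squares_bound[of "cmod (v i)" "cmod (v j)"] by (simp add: power2_eq_square)
    ultimately show ?thesis by linarith
  qed
  have "cmod (\<Sum>i<m. \<Sum>j<m. cnj (v i) * G i j * v j)
      \<le> (\<Sum>i<m. \<Sum>j<m. cmod (cnj (v i) * G i j * v j))"
    by (rule order_trans[OF norm_sum sum_mono[OF norm_sum]])
  also have "\<dots> \<le> (\<Sum>i<m. \<Sum>j<m. cmod (G i j) * V)"
  proof (intro sum_mono)
    fix i j assume "i \<in> {..<m}" "j \<in> {..<m}"
    then have "cmod (G i j) * (cmod (v i) * cmod (v j)) \<le> cmod (G i j) * V"
      using v_bound by (simp add: mult_left_mono)
    then show "cmod (cnj (v i) * G i j * v j) \<le> cmod (G i j) * V"
      by (simp add: norm_mult mult_ac)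
  qed
  also have "\<dots> = (\<Sum>i<m. \<Sum>j<m. cmod (G i j)) * V" by (simp only: sum_distrib_right)
  finally show ?thesis unfolding V_def .
qed

lemma cpsd_diag_dominant:
  fixes E Q :: "real mat"
  assumes E: "E \<in> carrier_mat m m" "E\<^sup>T = E" and Q: "Q \<in> carrier_mat m m" "Q\<^sup>T = - Q"
    and c: "(\<Sum>i<m. \<Sum>j<m. \<bar>E $$ (i,j)\<bar> + \<bar>Q $$ (i,j)\<bar>) \<le> c"
  shows "cpsd m (c \<cdot>\<^sub>m 1\<^sub>m m + E) Q"
  unfolding cpsd_def Let_def
proof (intro allI)
  fix v :: "nat \<Rightarrow> complex"
  define G where "G i j = complex_of_real (E $$ (i,j)) + \<i> * complex_of_real (Q $$ (i,j))" for i j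
  define V where "V = (\<Sum>i<m. (cmod (v i))\<^sup>2)"
  define g where "g = (\<Sum>i<m. \<Sum>j<m. cnj (v i) * G i j * v j)"
  define S where "S = (\<Sum>i<m. \<Sum>j<m. \<bar>E $$ (i,j)\<bar> + \<bar>Q $$ (i,j)\<bar>)"
  have q: "(\<Sum>i<m. \<Sum>j<m. cnj (v i) * (complex_of_real ((c \<cdot>\<^sub>m 1\<^sub>m m + E) $$ (i,j))
      + \<i> * complex_of_real (Q $$ (i,j))) * v j) = complex_of_real (c * V) + g" (is "?q = _")
  proof -
    have "?q = (\<Sum>i<m. \<Sum>j<m. (if i = j then complex_of_real c * (cnj (v i) * v j) else 0)
        + cnj (v i) * G i j * v j)"
      using E by (intro sum.cong refl) (auto simp: G_def algebra_simps)
    also have "\<dots> = complex_of_real (c * V) + g"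
      by (simp add: sum.distrib g_def V_def of_real_sum sum_distrib_left cnj_mult_self)
    finally show ?thesis .
  qed
  have "cnj (G i j) = G j i" if "i < m" "j < m" for i j
  proof -
    have "E $$ (j,i) = E $$ (i,j)" "Q $$ (j,i) = - Q $$ (i,j)"
      using transpose_eq_index[OF E(2)] transpose_eq_index[OF Q(2)] E(1) Q(1) that by auto
    then show ?thesis by (simp add: G_def complex_eq_iff)
  qed
  then have "Im g = 0" unfolding g_def by (rule hermitian_form_real)
  have "cmod g \<le> (\<Sum>i<m. \<Sum>j<m. cmod (G i j)) * V"
    unfolding g_def V_def by (rule norm_form_le)
  also have "\<dots> \<le> S * V"
  proof (rule mult_right_mono)
    show "(\<Sum>i<m. \<Sum>j<m. cmod (G i j)) \<le> S"
      unfolding S_def G_def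
      by (intro sum_mono) (rule order_trans[OF norm_triangle_ineq], simp add: norm_mult)
    show "0 \<le> V" unfolding V_def by (simp add: sum_nonneg)
  qed
  finally have "- (S * V) \<le> Re g" using abs_Re_le_cmod[of g] by linarith
  moreover have "S * V \<le> c * V"
    using c unfolding S_def V_def by (intro mult_right_mono sum_nonneg) auto
  ultimately show "Im ?q = 0 \<and> 0 \<le> Re ?q"
    unfolding q using \<open>Im g = 0\<close> by simp
qed

lemma cpsd_imp_rpsd:
  assumes "cpsd m P Q"
  shows "rpsd m P"
  unfolding rpsd_def
proof
  fix x :: "nat \<Rightarrow> real"
  have "0 \<le> Re (\<Sum>i<m. \<Sum>j<m. cnj (complex_of_real (x i)) * (complex_of_real (P $$ (i,j))
          + \<i> * complex_of_real (Q $$ (i,j))) * complex_of_real (x j))"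
    using spec[OF assms[unfolded cpsd_def Let_def], of "\<lambda>i. complex_of_real (x i)"] by blast
  then show "0 \<le> (\<Sum>i<m. \<Sum>j<m. x i * P $$ (i,j) * x j)" by (simp add: Re_sum algebra_simps)
qed

lemma Delta_carrier [simp]: "Delta n \<in> carrier_mat (2*n) (2*n)"
  unfolding Delta_def by simp

lemma Delta_transpose: "(Delta n)\<^sup>T = - Delta n"
  by (rule eq_matI) (auto simp: Delta_def)

lemma transpose_congruence_antisym:
  fixes T D :: "'a::comm_ring_1 mat"
  assumes T: "T \<in> carrier_mat k k" and D: "D \<in> carrier_mat k k" and "D\<^sup>T = - D"
  shows "(T * D * T\<^sup>T)\<^sup>T = - (T * D * T\<^sup>T)"
proof -
  have "(T * D * T\<^sup>T)\<^sup>T = T * (D\<^sup>T * T\<^sup>T)"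
    using T D by (simp add: transpose_mult[of T k k "D * T\<^sup>T" k] transpose_mult[of D k k "T\<^sup>T" k])
  also have "\<dots> = - (T * D * T\<^sup>T)"
    using T D \<open>D\<^sup>T = - D\<close>
    by (simp add: uminus_mult_left_mat uminus_mult_right_mat assoc_mult_mat[of T k k])
  finally show ?thesis .
qed

lemma gaussian_channel_large_noise:
  assumes T: "T \<in> carrier_mat (2*n) (2*n)" and E: "E \<in> carrier_mat (2*n) (2*n)" "E\<^sup>T = E"
    and d: "d \<in> carrier_vec (2*n)"
  obtains c0 where "\<And>c. c0 \<le> c \<Longrightarrow> gaussian_channel n T (c \<cdot>\<^sub>m 1\<^sub>m (2*n) + E) d"
proof
  fix c
  let ?Q = "Delta n - T * Delta n * T\<^sup>T"
  assume c: "(\<Sum>i<2*n. \<Sum>j<2*n. \<bar>E $$ (i,j)\<bar> + \<bar>?Q $$ (i,j)\<bar>) \<le> c"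
  have M: "T * Delta n * T\<^sup>T \<in> carrier_mat (2*n) (2*n)"
    using T by (metis Delta_carrier mult_carrier_mat transpose_carrier_mat)
  then have Q: "?Q \<in> carrier_mat (2*n) (2*n)" by (simp add: minus_carrier_mat)
  have "?Q\<^sup>T = (Delta n)\<^sup>T - (T * Delta n * T\<^sup>T)\<^sup>T"
    using M by (intro transpose_minus) auto
  also have "\<dots> = - ?Q"
    unfolding transpose_congruence_antisym[OF T Delta_carrier Delta_transpose] Delta_transpose
    using T by (intro eq_matI) (auto simp: Delta_def)
  finally have cp: "cpsd (2*n) (c \<cdot>\<^sub>m 1\<^sub>m (2*n) + E) ?Q"
    using cpsd_diag_dominant[OF E Q _ c] by blast
  have "(c \<cdot>\<^sub>m 1\<^sub>m (2*n) + E)\<^sup>T = c \<cdot>\<^sub>m 1\<^sub>m (2*n) + E"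
    using E transpose_eq_index[OF E(2)] by (intro eq_matI) auto
  then show "gaussian_channel n T (c \<cdot>\<^sub>m 1\<^sub>m (2*n) + E) d"
    unfolding gaussian_channel_def using T E d cp cpsd_imp_rpsd[OF cp] by auto
qed

section \<open>Real superchannels\<close>

lemma real_superchannel_carrier:
  assumes "real_superchannel n A Om Y db"
  shows "A \<in> carrier_mat (2*n) (2*n)" "Om \<in> carrier_mat (2*n) (2*n)" "Y \<in> carrier_mat (2*n) (2*n)"
    "Om * Om\<^sup>T = 1\<^sub>m (2*n)"
  using assms unfolding real_superchannel_def gaussian_superchannel_def by auto

lemma real_superchannel_large_noise:
  assumes RS: "real_superchannel n A Om Y db"
    and T: "T \<in> carrier_mat (2*n) (2*n)" and E: "E \<in> carrier_mat (2*n) (2*n)" "E\<^sup>T = E"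
    and d: "d \<in> carrier_vec (2*n)" and real: "real_channel n T E d"
  obtains c0 where "\<And>c. c0 \<le> c \<Longrightarrow>
    real_channel n (sc_T n A Om T) (sc_N A Y (c \<cdot>\<^sub>m 1\<^sub>m (2*n) + E)) (sc_d A db d)"
proof -
  obtain c0 where "\<And>c. c0 \<le> c \<Longrightarrow> gaussian_channel n T (c \<cdot>\<^sub>m 1\<^sub>m (2*n) + E) d"
    using gaussian_channel_large_noise[OF T E d] by blast
  moreover have "real_channel n T (c \<cdot>\<^sub>m 1\<^sub>m (2*n) + E) d" for c
    using real unfolding real_channel_iff_blocks blk_oe_smult_one_plus[OF E(1)] .
  ultimately show ?thesis using RS that unfolding real_superchannel_def by blast
qed

lemma real_superchannel_real_transform:
  assumes RS: "real_superchannel n A Om Y db"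
    and T: "T \<in> carrier_mat (2*n) (2*n)" and "real_transform n T"
  shows "real_transform n (sc_T n A Om T)"
proof -
  let ?Z = "0\<^sub>m (2*n) (2*n) :: real mat"
  have real_in: "real_channel n T ?Z (0\<^sub>v (2*n))"
    using \<open>real_transform n T\<close> unfolding real_channel_iff_blocks
    by (simp add: vec_e_eq_0_iff blk_oe_eq_0_iff)
  obtain c0 where "\<And>c. c0 \<le> c \<Longrightarrow>
      real_channel n (sc_T n A Om T) (sc_N A Y (c \<cdot>\<^sub>m 1\<^sub>m (2*n) + ?Z)) (sc_d A db (0\<^sub>v (2*n)))"
    using real_superchannel_large_noise[OF RS T _ _ _ real_in] by auto
  then show ?thesis unfolding real_channel_iff_blocks by blast
qed

lemma real_superchannel_vec_e:
  assumes RS: "real_superchannel n A Om Y db"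
    and d: "d \<in> carrier_vec (2*n)" and "vec_e n d = 0\<^sub>v n"
  shows "vec_e n (sc_d A db d) = 0\<^sub>v n"
proof -
  let ?Z = "0\<^sub>m (2*n) (2*n) :: real mat"
  have real_in: "real_channel n ?Z ?Z d"
    using \<open>vec_e n d = 0\<^sub>v n\<close> unfolding real_channel_iff_blocks
    by (simp add: real_transform_def blk_eo_eq_0_iff blk_oe_eq_0_iff)
  obtain c0 where "\<And>c. c0 \<le> c \<Longrightarrow>
      real_channel n (sc_T n A Om ?Z) (sc_N A Y (c \<cdot>\<^sub>m 1\<^sub>m (2*n) + ?Z)) (sc_d A db d)"
    using real_superchannel_large_noise[OF RS _ _ _ d real_in] by auto
  then show ?thesis unfolding real_channel_iff_blocks by blast
qed

lemma sc_N_smult_one_plus: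
  assumes A: "A \<in> carrier_mat m m" and N: "N \<in> carrier_mat m m" and Y: "Y \<in> carrier_mat m m"
  shows "sc_N A Y (c \<cdot>\<^sub>m 1\<^sub>m m + N) = c \<cdot>\<^sub>m (A * A\<^sup>T) + sc_N A Y N"
proof -
  have "A * (c \<cdot>\<^sub>m 1\<^sub>m m + N) = A * (c \<cdot>\<^sub>m 1\<^sub>m m) + A * N"
    using A N by (intro mult_add_distrib_mat) auto
  also have "A * (c \<cdot>\<^sub>m 1\<^sub>m m) = c \<cdot>\<^sub>m A"
    using mult_smult_distrib[OF A, of "1\<^sub>m m" m c] A by simp
  finally have "A * (c \<cdot>\<^sub>m 1\<^sub>m m + N) * A\<^sup>T = (c \<cdot>\<^sub>m A + A * N) * A\<^sup>T" by simp
  also have "\<dots> = (c \<cdot>\<^sub>m A) * A\<^sup>T + A * N * A\<^sup>T"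
    using A N by (intro add_mult_distrib_mat) auto
  also have "(c \<cdot>\<^sub>m A) * A\<^sup>T = c \<cdot>\<^sub>m (A * A\<^sup>T)"
    using A by (intro mult_smult_assoc_mat) auto
  finally have "A * (c \<cdot>\<^sub>m 1\<^sub>m m + N) * A\<^sup>T = c \<cdot>\<^sub>m (A * A\<^sup>T) + A * N * A\<^sup>T" .
  then show ?thesis
    unfolding sc_N_def using A N Y by (simp add: assoc_add_mat[of _ m m])
qed

lemma real_superchannel_noise_blk_oe:
  assumes RS: "real_superchannel n A Om Y db"
    and N: "N \<in> carrier_mat (2*n) (2*n)" "N\<^sup>T = N" and "blk_oe n N = 0\<^sub>m n n"
  shows "blk_oe n (sc_N A Y N) = 0\<^sub>m n n"
proof -
  let ?Z = "0\<^sub>m (2*n) (2*n) :: real mat"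
  note carrier = real_superchannel_carrier[OF RS]
  have real_in: "real_channel n ?Z N (0\<^sub>v (2*n))"
    using \<open>blk_oe n N = 0\<^sub>m n n\<close> unfolding real_channel_iff_blocks
    by (simp add: real_transform_def vec_e_eq_0_iff blk_eo_eq_0_iff blk_oe_eq_0_iff)
  obtain c0 where "\<And>c. c0 \<le> c \<Longrightarrow>
      real_channel n (sc_T n A Om ?Z) (sc_N A Y (c \<cdot>\<^sub>m 1\<^sub>m (2*n) + N)) (sc_d A db (0\<^sub>v (2*n)))"
    using real_superchannel_large_noise[OF RS _ N _ real_in] by auto
  then have "blk_oe n (sc_N A Y (c \<cdot>\<^sub>m 1\<^sub>m (2*n) + N)) = 0\<^sub>m n n" if "c0 \<le> c" for c
    using that unfolding real_channel_iff_blocks by blast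
  \<comment> \<open>The output block is affine in the noise level c and vanishes for two values of c.\<close>
  then have affine: "c * (A * A\<^sup>T) $$ (2*k, 2*l+1) + sc_N A Y N $$ (2*k, 2*l+1) = 0"
    if "c0 \<le> c" "k < n" "l < n" for c k l
    using that carrier N
    unfolding sc_N_smult_one_plus[OF carrier(1) N(1) carrier(3)] blk_oe_eq_0_iff
    by (auto simp: sc_N_def)
  have "sc_N A Y N $$ (2*k, 2*l+1) = 0" if "k < n" "l < n" for k l
  proof -
    have "(A * A\<^sup>T) $$ (2*k, 2*l+1) = 0"
      using affine[of c0 k l] affine[of "c0 + 1" k l] that by (simp add: distrib_right)
    then show ?thesis using affine[of c0 k l] that by simp
  qed
  then show ?thesis unfolding blk_oe_eq_0_iff by blast
qed

lemma sum_lessThan_double: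
  fixes f :: "nat \<Rightarrow> 'a::comm_monoid_add"
  shows "(\<Sum>i<2*n. f i) = (\<Sum>k<n. f (2*k)) + (\<Sum>k<n. f (2*k+1))"
  by (induction n) (simp_all add: algebra_simps)

lemma index_mult_mult_mat:
  assumes "A \<in> carrier_mat m k" "X \<in> carrier_mat k l" "P \<in> carrier_mat l r" "x < m" "y < r"
  shows "(A * X * P) $$ (x,y) = (\<Sum>a<k. \<Sum>b<l. A $$ (x,a) * X $$ (a,b) * P $$ (b,y))"
  using assms
  by (simp add: scalar_prod_def atLeast0LessThan sum_distrib_left mult.assoc)

definition sigma_conj_transpose :: "nat \<Rightarrow> real mat \<Rightarrow> real mat" where
  "sigma_conj_transpose n Om = Sigma n * Om\<^sup>T * Sigma n"

lemma Sigma_carrier [simp]: "Sigma n \<in> carrier_mat (2*n) (2*n)"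
  unfolding Sigma_def by simp

lemma sigma_conj_transpose_carrier:
  "Om \<in> carrier_mat (2*n) (2*n) \<Longrightarrow> sigma_conj_transpose n Om \<in> carrier_mat (2*n) (2*n)"
  unfolding sigma_conj_transpose_def by (metis Sigma_carrier mult_carrier_mat transpose_carrier_mat)

lemma Sigma_mult_index:
  assumes "X \<in> carrier_mat (2*n) k" "i < 2*n" "j < k"
  shows "(Sigma n * X) $$ (i,j) = (if even i then 1 else -1) * X $$ (i,j)"
  using assms
  by (simp add: Sigma_def scalar_prod_def atLeast0LessThan if_distrib[of "\<lambda>z. z * _"] sum.delta
      cong: if_cong)

lemma mult_Sigma_index:
  assumes "X \<in> carrier_mat k (2*n)" "i < k" "j < 2*n"
  shows "(X * Sigma n) $$ (i,j) = X $$ (i,j) * (if even j then 1 else -1)"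
  using assms
  by (simp add: Sigma_def scalar_prod_def atLeast0LessThan if_distrib[of "\<lambda>z. _ * z"] sum.delta'
      cong: if_cong)

lemma sigma_conj_transpose_index:
  assumes Om: "Om \<in> carrier_mat (2*n) (2*n)" and "i < 2*n" "j < 2*n"
  shows "sigma_conj_transpose n Om $$ (i,j)
    = (if even i then 1 else -1) * Om $$ (j,i) * (if even j then 1 else -1)"
proof -
  have S: "Sigma n * Om\<^sup>T \<in> carrier_mat (2*n) (2*n)"
    using Om by (metis Sigma_carrier mult_carrier_mat transpose_carrier_mat)
  then show ?thesis
    using assms unfolding sigma_conj_transpose_def
    by (simp add: mult_Sigma_index[OF S] Sigma_mult_index[of "Om\<^sup>T"])
qed

lemma sigma_conj_transpose_blocks:
  assumes Om: "Om \<in> carrier_mat (2*n) (2*n)"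
  shows "blk_eo n (sigma_conj_transpose n Om) = 0\<^sub>m n n \<longleftrightarrow> blk_oe n Om = 0\<^sub>m n n"
    and "blk_oe n (sigma_conj_transpose n Om) = 0\<^sub>m n n \<longleftrightarrow> blk_eo n Om = 0\<^sub>m n n"
  unfolding blk_eo_eq_0_iff blk_oe_eq_0_iff using sigma_conj_transpose_index[OF Om] by auto

lemma sc_T_eq:
  assumes "A \<in> carrier_mat (2*n) (2*n)" "Om \<in> carrier_mat (2*n) (2*n)" "T \<in> carrier_mat (2*n) (2*n)"
  shows "sc_T n A Om T = A * T * sigma_conj_transpose n Om"
proof -
  have S: "Sigma n * Om\<^sup>T \<in> carrier_mat (2*n) (2*n)"
    using assms by (metis Sigma_carrier mult_carrier_mat transpose_carrier_mat)
  have "A * T * (Sigma n * Om\<^sup>T * Sigma n) = A * T * (Sigma n * Om\<^sup>T) * Sigma n"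
    using assms S by (intro assoc_mult_mat[symmetric, of _ "2*n" "2*n" _ "2*n" _ "2*n"]) auto
  also have "A * T * (Sigma n * Om\<^sup>T) = A * T * Sigma n * Om\<^sup>T"
    using assms by (intro assoc_mult_mat[symmetric, of _ "2*n" "2*n" _ "2*n" _ "2*n"]) auto
  finally show ?thesis unfolding sc_T_def sigma_conj_transpose_def by simp
qed

lemma sc_T_carrier:
  assumes "A \<in> carrier_mat (2*n) (2*n)" "Om \<in> carrier_mat (2*n) (2*n)" "T \<in> carrier_mat (2*n) (2*n)"
  shows "sc_T n A Om T \<in> carrier_mat (2*n) (2*n)"
  using assms unfolding sc_T_def by (metis Sigma_carrier mult_carrier_mat transpose_carrier_mat)

lemma sc_T_add:
  assumes A: "A \<in> carrier_mat (2*n) (2*n)" and Om: "Om \<in> carrier_mat (2*n) (2*n)"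
    and T: "T \<in> carrier_mat (2*n) (2*n)" and T': "T' \<in> carrier_mat (2*n) (2*n)"
  shows "sc_T n A Om (T + T') = sc_T n A Om T + sc_T n A Om T'"
  using A T T' sigma_conj_transpose_carrier[OF Om]
  by (simp add: sc_T_eq[OF A Om] mult_add_distrib_mat[of A "2*n" "2*n"]
      add_mult_distrib_mat[of _ "2*n" "2*n"])

lemma real_superchannel_blk_eo:
  assumes RS: "real_superchannel n A Om Y db"
    and T: "T \<in> carrier_mat (2*n) (2*n)" and "blk_eo n T = 0\<^sub>m n n"
  shows "blk_eo n (sc_T n A Om T) = 0\<^sub>m n n"
proof -
  note carrier = real_superchannel_carrier[OF RS]
  define T1 where "T1 = mat (2*n) (2*n) (\<lambda>(i,j). if even i then T $$ (i,j) else 0)"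
  define T2 where "T2 = mat (2*n) (2*n) (\<lambda>(i,j). if even i then 0 else T $$ (i,j))"
  have T12: "T1 \<in> carrier_mat (2*n) (2*n)" "T2 \<in> carrier_mat (2*n) (2*n)" "T = T1 + T2"
    unfolding T1_def T2_def using T by (auto intro!: eq_matI)
  have "real_transform n T1" "real_transform n T2"
    using \<open>blk_eo n T = 0\<^sub>m n n\<close>
    unfolding real_transform_def blk_eo_eq_0_iff blk_oe_eq_0_iff blk_ee_eq_0_iff T1_def T2_def
    by auto
  then have "blk_eo n (sc_T n A Om T1) = 0\<^sub>m n n" "blk_eo n (sc_T n A Om T2) = 0\<^sub>m n n"
    using real_superchannel_real_transform[OF RS] T12 unfolding real_transform_def by blast+
  moreover have "sc_T n A Om T1 \<in> carrier_mat (2*n) (2*n)"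
    "sc_T n A Om T2 \<in> carrier_mat (2*n) (2*n)"
    using T12 carrier by (auto intro: sc_T_carrier)
  ultimately show ?thesis
    using T12 by (simp add: sc_T_add[OF carrier(1,2)] blk_eo_add)
qed

lemma blk_eo_eq_0_if_odd_row:
  fixes A P :: "real mat"
  assumes A: "A \<in> carrier_mat (2*n) (2*n)" and P: "P \<in> carrier_mat (2*n) (2*n)"
    and preserve: "\<And>T. T \<in> carrier_mat (2*n) (2*n) \<Longrightarrow> blk_eo n T = 0\<^sub>m n n \<Longrightarrow>
      blk_eo n (A * T * P) = 0\<^sub>m n n"
    and "k < n" "p < 2*n" "A $$ (2*k+1, p) \<noteq> 0"
  shows "blk_eo n P = 0\<^sub>m n n"
  unfolding blk_eo_eq_0_iff
proof (intro allI impI)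
  fix r j assume "r < n" "j < n"
  define U where "U = mat (2*n) (2*n) (\<lambda>(a,b). if a = p \<and> b = 2*r+1 then 1 else 0 :: real)"
  have U: "U \<in> carrier_mat (2*n) (2*n)" unfolding U_def by simp
  have "blk_eo n U = 0\<^sub>m n n" unfolding blk_eo_eq_0_iff U_def by auto presburger
  then have "(A * U * P) $$ (2*k+1, 2*j) = 0"
    using preserve[OF U] \<open>k < n\<close> \<open>j < n\<close> unfolding blk_eo_eq_0_iff by blast
  moreover have "(A * U * P) $$ (2*k+1, 2*j)
      = (\<Sum>a<2*n. \<Sum>b<2*n. A $$ (2*k+1, a) * U $$ (a,b) * P $$ (b, 2*j))"
    using \<open>k < n\<close> \<open>j < n\<close> by (intro index_mult_mult_mat[OF A U P]) auto
  also have "\<dots> = (\<Sum>a<2*n. \<Sum>b<2*n. if a = p then if b = 2*r+1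
      then A $$ (2*k+1, p) * P $$ (2*r+1, 2*j) else 0 else 0)"
    using \<open>r < n\<close> by (intro sum.cong refl) (auto simp: U_def)
  also have "\<dots> = (\<Sum>a<2*n. if a = p then A $$ (2*k+1, p) * P $$ (2*r+1, 2*j) else 0)"
    using \<open>r < n\<close> by (intro sum.cong refl) auto
  also have "\<dots> = A $$ (2*k+1, p) * P $$ (2*r+1, 2*j)"
    using \<open>p < 2*n\<close> by simp
  ultimately show "P $$ (2*r+1, 2*j) = 0" using \<open>A $$ (2*k+1, p) \<noteq> 0\<close> by simp
qed

text \<open>Count the squared entries of an orthogonal matrix by rows and by columns: the even rows
  carry mass n, all of it in the even columns, which carry mass n in total.\<close>
lemma orthogonal_blk_eo_eq_0:
  fixes Om :: "real mat"
  assumes Om: "Om \<in> carrier_mat (2*n) (2*n)" and orth: "Om * Om\<^sup>T = 1\<^sub>m (2*n)"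
    and oe: "blk_oe n Om = 0\<^sub>m n n"
  shows "blk_eo n Om = 0\<^sub>m n n"
proof -
  have orth': "Om\<^sup>T * Om = 1\<^sub>m (2*n)"
    using Om by (intro mat_mult_left_right_inverse[OF Om _ orth]) auto
  have rows: "(\<Sum>j<2*n. (Om $$ (i,j))\<^sup>2) = 1" if "i < 2*n" for i
  proof -
    have "(Om * Om\<^sup>T) $$ (i,i) = (\<Sum>j<2*n. (Om $$ (i,j))\<^sup>2)"
      using Om that by (simp add: scalar_prod_def atLeast0LessThan power2_eq_square)
    then show ?thesis using orth that by simp
  qed
  have cols: "(\<Sum>i<2*n. (Om $$ (i,j))\<^sup>2) = 1" if "j < 2*n" for j
  proof -
    have "(Om\<^sup>T * Om) $$ (j,j) = (\<Sum>i<2*n. (Om $$ (i,j))\<^sup>2)"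
      using Om that by (simp add: scalar_prod_def atLeast0LessThan power2_eq_square)
    then show ?thesis using orth' that by simp
  qed
  have "(\<Sum>k<n. \<Sum>l<n. (Om $$ (2*k, 2*l))\<^sup>2) = (\<Sum>k<n. \<Sum>j<2*n. (Om $$ (2*k, j))\<^sup>2)"
    using oe unfolding blk_oe_eq_0_iff by (intro sum.cong[OF refl]) (simp add: sum_lessThan_double)
  also have "\<dots> = n" using rows by simp
  finally have even_rows: "(\<Sum>l<n. \<Sum>k<n. (Om $$ (2*k, 2*l))\<^sup>2) = n"
    by (subst sum.swap) simp
  have "(\<Sum>l<n. \<Sum>k<n. (Om $$ (2*k, 2*l))\<^sup>2) + (\<Sum>l<n. \<Sum>k<n. (Om $$ (2*k+1, 2*l))\<^sup>2)
      = (\<Sum>l<n. \<Sum>i<2*n. (Om $$ (i, 2*l))\<^sup>2)"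
    by (simp only: sum_lessThan_double sum.distrib)
  also have "\<dots> = n" using cols by simp
  finally have "(\<Sum>l<n. \<Sum>k<n. (Om $$ (2*k+1, 2*l))\<^sup>2) = 0" using even_rows by simp
  then have "\<forall>l\<in>{..<n}. \<forall>k\<in>{..<n}. (Om $$ (2*k+1, 2*l))\<^sup>2 = 0"
    by (simp add: sum_nonneg_eq_0_iff sum_nonneg)
  then show ?thesis unfolding blk_eo_eq_0_iff by simp
qed

lemma mult_odd_columns_cong:
  assumes A: "A \<in> carrier_mat m (2*n)" and X: "X \<in> carrier_mat (2*n) (2*n)"
    and X': "X' \<in> carrier_mat (2*n) (2*n)" and P: "P \<in> carrier_mat (2*n) (2*n)"
    and P_oe: "blk_oe n P = 0\<^sub>m n n"
    and odd_cols: "\<And>a r. a < 2*n \<Longrightarrow> r < n \<Longrightarrow> X $$ (a, 2*r+1) = X' $$ (a, 2*r+1)"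
    and "x < m" "l < n"
  shows "(A * X * P) $$ (x, 2*l+1) = (A * X' * P) $$ (x, 2*l+1)"
proof -
  have y: "2*l+1 < 2*n" using \<open>l < n\<close> by simp
  have inner: "(\<Sum>b<2*n. A $$ (x,a) * X $$ (a,b) * P $$ (b, 2*l+1))
      = (\<Sum>b<2*n. A $$ (x,a) * X' $$ (a,b) * P $$ (b, 2*l+1))" if "a < 2*n" for a
    using P_oe odd_cols[OF that] \<open>l < n\<close> unfolding blk_oe_eq_0_iff
    by (simp add: sum_lessThan_double)
  show ?thesis
    unfolding index_mult_mult_mat[OF A X P \<open>x < m\<close> y] index_mult_mult_mat[OF A X' P \<open>x < m\<close> y]
    by (rule sum.cong[OF refl]) (rule inner, simp)
qed

lemma real_superchannel_blk_oe_or_ee: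
  assumes RS: "real_superchannel n A Om Y db"
    and T: "T \<in> carrier_mat (2*n) (2*n)" and "blk_oe n T = 0\<^sub>m n n \<or> blk_ee n T = 0\<^sub>m n n"
  shows "blk_oe n (sc_T n A Om T) = 0\<^sub>m n n \<or> blk_ee n (sc_T n A Om T) = 0\<^sub>m n n"
proof -
  note carrier = real_superchannel_carrier[OF RS]
  let ?P = "sigma_conj_transpose n Om"
  have P: "?P \<in> carrier_mat (2*n) (2*n)" by (rule sigma_conj_transpose_carrier[OF carrier(2)])
  have sc_T: "sc_T n A Om X = A * X * ?P" if "X \<in> carrier_mat (2*n) (2*n)" for X
    by (rule sc_T_eq[OF carrier(1,2) that])
  show ?thesis
  proof (cases "\<forall>k<n. \<forall>p<2*n. A $$ (2*k+1, p) = 0")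
    case True
    have "sc_T n A Om T $$ (2*k+1, 2*l+1) = 0" if "k < n" "l < n" for k l
      unfolding sc_T[OF T] using that True
      by (subst index_mult_mult_mat[OF carrier(1) T P]) auto
    then show ?thesis unfolding blk_ee_eq_0_iff by blast
  next
    case False
    then obtain k p where "k < n" "p < 2*n" "A $$ (2*k+1, p) \<noteq> 0" by blast
    then have "blk_eo n ?P = 0\<^sub>m n n"
      using blk_eo_eq_0_if_odd_row[OF carrier(1) P] real_superchannel_blk_eo[OF RS] sc_T by metis
    then have "blk_oe n ?P = 0\<^sub>m n n"
      using orthogonal_blk_eo_eq_0[OF carrier(2,4)] sigma_conj_transpose_blocks[OF carrier(2)]
      by blast
    define R where "R = mat (2*n) (2*n) (\<lambda>(i,j). if odd i \<and> even j then 0 else T $$ (i,j))"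
    have R: "R \<in> carrier_mat (2*n) (2*n)" unfolding R_def by simp
    have "real_transform n R"
      using \<open>blk_oe n T = 0\<^sub>m n n \<or> blk_ee n T = 0\<^sub>m n n\<close>
      unfolding real_transform_def blk_eo_eq_0_iff blk_oe_eq_0_iff blk_ee_eq_0_iff R_def by auto
    then have R_out: "blk_oe n (sc_T n A Om R) = 0\<^sub>m n n \<or> blk_ee n (sc_T n A Om R) = 0\<^sub>m n n"
      using real_superchannel_real_transform[OF RS R] unfolding real_transform_def by blast
    have "sc_T n A Om T $$ (x, 2*l+1) = sc_T n A Om R $$ (x, 2*l+1)"
      if "x < 2*n" "l < n" for x l
      unfolding sc_T[OF T] sc_T[OF R]
      by (rule mult_odd_columns_cong[OF carrier(1) T R P \<open>blk_oe n ?P = 0\<^sub>m n n\<close> _ that])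
        (simp add: R_def)
    then have "blk_oe n (sc_T n A Om T) = blk_oe n (sc_T n A Om R)"
      "blk_ee n (sc_T n A Om T) = blk_ee n (sc_T n A Om R)"
      unfolding blk_oe_def blk_ee_def by (auto intro!: eq_matI)
    with R_out show ?thesis by simp
  qed
qed

lemma I_GC_real_superchannel_le:
  assumes RS: "real_superchannel n A Om Y db" and "gaussian_channel n T N d"
  shows "I_GC n (sc_T n A Om T) (sc_N A Y N) (sc_d A db d) \<le> I_GC n T N d"
proof -
  have T: "T \<in> carrier_mat (2*n) (2*n)" and N: "N \<in> carrier_mat (2*n) (2*n)" "N\<^sup>T = N"
    and d: "d \<in> carrier_vec (2*n)"
    using \<open>gaussian_channel n T N d\<close> unfolding gaussian_channel_def by auto
  have "hh (trace_norm (blk_eo n (sc_T n A Om T))) \<le> hh (trace_norm (blk_eo n T))"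
    by (rule hh_mono) (unfold trace_norm_blk_eq_0_iff, rule real_superchannel_blk_eo[OF RS T])
  moreover have "hh (trace_norm (blk_oe n (sc_T n A Om T)) * trace_norm (blk_ee n (sc_T n A Om T)))
      \<le> hh (trace_norm (blk_oe n T) * trace_norm (blk_ee n T))"
    by (rule hh_mono)
      (unfold mult_eq_0_iff trace_norm_blk_eq_0_iff, rule real_superchannel_blk_oe_or_ee[OF RS T])
  moreover have "hh (trace_norm (blk_oe n (sc_N A Y N))) \<le> hh (trace_norm (blk_oe n N))"
    by (rule hh_mono) (unfold trace_norm_blk_eq_0_iff, rule real_superchannel_noise_blk_oe[OF RS N])
  moreover have "hh (l1_norm (vec_e n (sc_d A db d))) \<le> hh (l1_norm (vec_e n d))"
    by (rule hh_mono) (unfold l1_norm_vec_e_eq_0_iff, rule real_superchannel_vec_e[OF RS d])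
  ultimately show ?thesis unfolding I_GC_def by linarith
qed

theorem theorem4:
  fixes n :: nat
  assumes "n \<ge> 1"
  shows "(\<forall>T N d. gaussian_channel n T N d \<longrightarrow>
            I_GC n T N d \<ge> 0 \<and> (I_GC n T N d = 0 \<longleftrightarrow> real_channel n T N d))
       \<and> (\<forall>A Om Y db T N d. real_superchannel n A Om Y db \<and> gaussian_channel n T N d \<longrightarrow>
            I_GC n (sc_T n A Om T) (sc_N A Y N) (sc_d A db d) \<le> I_GC n T N d)"
  by (simp add: I_GC_nonneg I_GC_eq_0_iff I_GC_real_superchannel_le)

end
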